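(* Let $f \in L^\infty(0,L)$. Let $u_0 \in V$ satisfy $a_0(u_0,v) = \int_0^L f v\,dx$ for all $v \in V$, and for $n \ge 1$ let $u_n \in V$ satisfy $\sum_{j=0}^{n} a_j(u_{n-j}, v) = 0$ for all $v \in V$. Then for every $m \ge 0$ there is a constant $\tilde C_m$, depending only on $m$ and $L$, such that $$|u_m|_{H^1} \le \tilde C_m\, \|\psi\|_\infty^m\, \|f\|_\infty.$$
   Context: Let $L>0$ and let $\kappa:(0,L)\to\mathbb{R}$ be measurable with $0<\kappa_{\min}\le \kappa(x)\le \kappa_{\max}$ for a.e. $x$; set $\psi = \log \kappa \in L^\infty(0,L)$, with $\|\cdot\|_\infty$ the essential supremum norm. $V = \{ v \in H^1(0,L) : v(0) = 0\}$. For integers $j \ge 0$ and $u,v \in V$, define $a_j(u,v) = \frac{1}{j!}\int_0^L \psi(x)^j\, u'(x)\, v'(x)\,dx$. The $H^1$-seminorm is $|v|_{H^1} = \left(\int_0^L |v'|^2\,dx\right)^{1/2}$. *)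

theory Defs
  imports "HOL-Analysis.Analysis" "HOL-Probability.Essential_Supremum"
begin

abbreviation Iv :: "real \<Rightarrow> real measure" where
  "Iv L \<equiv> restrict_space lborel {0<..<L}"

definition Linf_norm :: "real \<Rightarrow> (real \<Rightarrow> real) \<Rightarrow> real" where
  "Linf_norm L f = real_of_ereal (esssup (Iv L) (\<lambda>x. ereal \<bar>f x\<bar>))"

definition in_Linf :: "real \<Rightarrow> (real \<Rightarrow> real) \<Rightarrow> bool" where
  "in_Linf L f \<longleftrightarrow> f \<in> borel_measurable (Iv L) \<and> (\<exists>B. AE x in Iv L. \<bar>f x\<bar> \<le> B)"

text \<open>inV L v g: v belongs to V = {v in H^1(0,L), v(0)=0} with weak derivative g,
  i.e. g is in L^2(0,L) and v(x) = integral from 0 to x of g, for x in [0,L]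
  (the absolutely continuous representative of v).\<close>
definition inV :: "real \<Rightarrow> (real \<Rightarrow> real) \<Rightarrow> (real \<Rightarrow> real) \<Rightarrow> bool" where
  "inV L v g \<longleftrightarrow> g \<in> borel_measurable (Iv L)
     \<and> set_integrable lborel {0<..<L} (\<lambda>x. (g x)\<^sup>2)
     \<and> (\<forall>x\<in>{0..L}. v x = (LBINT t=0..x. g t))"

text \<open>a_j(u,v) expressed via the derivatives du = u', dv = v'.\<close>
definition aj :: "real \<Rightarrow> (real \<Rightarrow> real) \<Rightarrow> nat \<Rightarrow> (real \<Rightarrow> real) \<Rightarrow> (real \<Rightarrow> real) \<Rightarrow> real" where
  "aj L \<psi> j du dv = (1 / fact j) * (LBINT x=0..L. (\<psi> x) ^ j * du x * dv x)"

definition H1_semi :: "real \<Rightarrow> (real \<Rightarrow> real) \<Rightarrow> real" where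
  "H1_semi L du = sqrt (LBINT x=0..L. (du x)\<^sup>2)"

end

theory Submission
  imports Defs
begin

text \<open>Write \<open>|\<cdot>|\<close> for the \<open>H\<^sup>1\<close>-seminorm and \<open>\<parallel>\<cdot>\<parallel>\<close> for the \<open>L\<^sup>\<infinity>\<close>-norm. Testing the
  \<open>n\<close>-th equation with \<open>v = u\<^sub>n\<close> isolates \<open>a\<^sub>0(u\<^sub>n, u\<^sub>n) = |u\<^sub>n|\<^sup>2\<close>, while the weighted
  Cauchy--Schwarz inequality bounds every other term \<open>a\<^sub>j(u\<^sub>n\<^sub>-\<^sub>j, u\<^sub>n)\<close> by
  \<open>\<parallel>\<psi>\<parallel>\<^sup>j |u\<^sub>n\<^sub>-\<^sub>j| |u\<^sub>n|\<close>; hence \<open>|u\<^sub>n| \<le> \<Sum>\<^sub>1\<^sub>\<le>\<^sub>j\<^sub>\<le>\<^sub>n \<parallel>\<psi>\<parallel>\<^sup>j |u\<^sub>n\<^sub>-\<^sub>j|\<close>. For \<open>n = 0\<close> the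
  same test together with \<open>|v(x)| \<le> \<surd>L |v|\<close> gives \<open>|u\<^sub>0| \<le> L\<surd>L \<parallel>f\<parallel>\<close>, and induction
  on the recursion yields \<open>|u\<^sub>m| \<le> 2\<^sup>m L\<surd>L \<parallel>\<psi>\<parallel>\<^sup>m \<parallel>f\<parallel>\<close>.\<close>

lemma abs_mult_le_half_sum_squares: "\<bar>a * b\<bar> \<le> (a\<^sup>2 + b\<^sup>2) / (2::real)"
proof -
  have "0 \<le> (\<bar>a\<bar> - \<bar>b\<bar>)\<^sup>2"
    by simp
  then show ?thesis
    by (simp add: power2_eq_square abs_mult algebra_simps)
qed

lemma integrable_abs_mult_square_integrable:
  fixes a b :: "'a \<Rightarrow> real"
  assumes "a \<in> borel_measurable M" "b \<in> borel_measurable M"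
    and "integrable M (\<lambda>x. (a x)\<^sup>2)" "integrable M (\<lambda>x. (b x)\<^sup>2)"
  shows "integrable M (\<lambda>x. \<bar>a x * b x\<bar>)"
  by (rule Bochner_Integration.integrable_bound[where f="\<lambda>x. ((a x)\<^sup>2 + (b x)\<^sup>2) / 2"])
     (use assms abs_mult_le_half_sum_squares in auto)

lemma integral_abs_mult_le_sqrt:
  fixes a b :: "'a \<Rightarrow> real"
  assumes [measurable]: "a \<in> borel_measurable M" "b \<in> borel_measurable M"
    and ai: "integrable M (\<lambda>x. (a x)\<^sup>2)" and bi: "integrable M (\<lambda>x. (b x)\<^sup>2)"
  shows "(\<integral>x. \<bar>a x * b x\<bar> \<partial>M) \<le> sqrt (\<integral>x. (a x)\<^sup>2 \<partial>M) * sqrt (\<integral>x. (b x)\<^sup>2 \<partial>M)"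
proof -
  have abi: "integrable M (\<lambda>x. \<bar>a x * b x\<bar>)"
    using integrable_abs_mult_square_integrable[OF assms] .
  have "ennreal ((\<integral>x. \<bar>a x * b x\<bar> \<partial>M)\<^sup>2)
      = (\<integral>\<^sup>+x. ennreal \<bar>a x\<bar> * ennreal \<bar>b x\<bar> \<partial>M)\<^sup>2"
    using nn_integral_eq_integral[OF abi] by (simp add: abs_mult ennreal_power ennreal_mult)
  also have "\<dots> \<le> (\<integral>\<^sup>+x. ennreal \<bar>a x\<bar> ^ 2 \<partial>M) * (\<integral>\<^sup>+x. ennreal \<bar>b x\<bar> ^ 2 \<partial>M)"
    by (rule Cauchy_Schwarz_nn_integral) auto
  also have "\<dots> = ennreal ((\<integral>x. (a x)\<^sup>2 \<partial>M) * (\<integral>x. (b x)\<^sup>2 \<partial>M))"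
    using nn_integral_eq_integral[OF ai] nn_integral_eq_integral[OF bi]
    by (simp add: ennreal_mult ennreal_power)
  finally have "(\<integral>x. \<bar>a x * b x\<bar> \<partial>M)\<^sup>2 \<le> (\<integral>x. (a x)\<^sup>2 \<partial>M) * (\<integral>x. (b x)\<^sup>2 \<partial>M)"
    by (simp add: ennreal_le_iff)
  then show ?thesis
    by (simp add: real_le_rsqrt flip: real_sqrt_mult)
qed

lemma abs_integral_weighted_mult_le:
  fixes a b w :: "'a \<Rightarrow> real"
  assumes "a \<in> borel_measurable M" "b \<in> borel_measurable M"
    and "integrable M (\<lambda>x. (a x)\<^sup>2)" "integrable M (\<lambda>x. (b x)\<^sup>2)"
    and w: "AE x in M. \<bar>w x\<bar> \<le> K" and K: "0 \<le> K"
  shows "\<bar>\<integral>x. w x * a x * b x \<partial>M\<bar> \<le> K * (sqrt (\<integral>x. (a x)\<^sup>2 \<partial>M) * sqrt (\<integral>x. (b x)\<^sup>2 \<partial>M))"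
proof -
  have "\<bar>\<integral>x. w x * a x * b x \<partial>M\<bar> \<le> (\<integral>x. \<bar>w x * a x * b x\<bar> \<partial>M)"
    by (rule integral_abs_bound)
  also have "\<dots> \<le> (\<integral>x. K * \<bar>a x * b x\<bar> \<partial>M)"
  proof (rule integral_mono_AE')
    show "integrable M (\<lambda>x. K * \<bar>a x * b x\<bar>)"
      using integrable_abs_mult_square_integrable[OF assms(1-4)] by simp
    show "AE x in M. \<bar>w x * a x * b x\<bar> \<le> K * \<bar>a x * b x\<bar>"
      using w by eventually_elim (simp add: abs_mult mult.assoc mult_right_mono)
  qed (use K in simp)
  also have "\<dots> \<le> K * (sqrt (\<integral>x. (a x)\<^sup>2 \<partial>M) * sqrt (\<integral>x. (b x)\<^sup>2 \<partial>M))"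
    using integral_abs_mult_le_sqrt[OF assms(1-4)] K by (simp add: mult_left_mono)
  finally show ?thesis .
qed

lemma le_of_square_le_mult:
  fixes a K :: real
  assumes "0 \<le> a" "0 \<le> K" "a\<^sup>2 \<le> K * a"
  shows "a \<le> K"
proof (cases "a = 0")
  case False
  then show ?thesis
    using assms by (intro mult_right_le_imp_le[of a a K]) (auto simp: power2_eq_square)
qed (use assms in simp)

lemma sum_power2_diff: "(\<Sum>j=1..n. (2::real) ^ (n - j)) = 2 ^ n - 1"
proof (induction n)
  case (Suc n)
  have "(\<Sum>j=1..n. (2::real) ^ (Suc n - j)) = 2 * (\<Sum>j=1..n. 2 ^ (n - j))"
    by (simp add: sum_distrib_left Suc_diff_le flip: power_Suc)
  then show ?case using Suc by simp
qed simp

lemma convolution_recursion_bound: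
  fixes N :: "nat \<Rightarrow> real"
  assumes base: "N 0 \<le> C" and step: "\<And>n. n \<ge> 1 \<Longrightarrow> N n \<le> (\<Sum>j=1..n. P ^ j * N (n - j))"
    and "0 \<le> P" "0 \<le> C"
  shows "N n \<le> 2 ^ n * P ^ n * C"
proof (induction n rule: less_induct)
  case (less n)
  show ?case
  proof (cases "n = 0")
    case False
    have "N n \<le> (\<Sum>j=1..n. P ^ j * N (n - j))"
      using False step by simp
    also have "\<dots> \<le> (\<Sum>j=1..n. P ^ j * (2 ^ (n - j) * P ^ (n - j) * C))"
      using less \<open>0 \<le> P\<close> by (intro sum_mono mult_left_mono) auto
    also have "\<dots> = (\<Sum>j=1..n. 2 ^ (n - j)) * P ^ n * C"
      unfolding sum_distrib_right by (rule sum.cong) (auto simp: mult_ac simp flip: power_add)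
    also have "\<dots> \<le> 2 ^ n * P ^ n * C"
      unfolding sum_power2_diff using assms(3,4) by (intro mult_right_mono) auto
    finally show ?thesis .
  qed (use base in simp)
qed

lemma space_Iv: "space (Iv L) = {0<..<L}"
  by (simp add: space_restrict_space)

lemma finite_measure_Iv: "finite_measure (Iv L)"
proof (rule finite_measureI)
  have "emeasure lborel {0<..<L} \<le> emeasure lborel {0..\<bar>L\<bar>}"
    by (rule emeasure_mono) auto
  then show "emeasure (Iv L) (space (Iv L)) \<noteq> \<infinity>"
    by (auto simp: space_Iv emeasure_restrict_space top_unique)
qed

lemma measure_Iv: "0 \<le> L \<Longrightarrow> measure (Iv L) {0<..<L} = L"
  by (simp add: measure_restrict_space)

lemma LBINT_eq_integral_Iv: "0 \<le> L \<Longrightarrow> (LBINT x=0..L. h x) = (\<integral>x. h x \<partial>Iv L)"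
  by (simp add: interval_lebesgue_integral_def set_lebesgue_integral_def
      integral_restrict_space zero_ereal_def)

lemma H1_semi_eq: "0 \<le> L \<Longrightarrow> H1_semi L g = sqrt (\<integral>x. (g x)\<^sup>2 \<partial>Iv L)"
  by (simp add: H1_semi_def LBINT_eq_integral_Iv)

lemma H1_semi_nonneg: "0 \<le> L \<Longrightarrow> 0 \<le> H1_semi L g"
  by (simp add: H1_semi_eq)

lemma aj_eq: "0 \<le> L \<Longrightarrow> aj L \<psi> j a b = 1 / fact j * (\<integral>x. \<psi> x ^ j * a x * b x \<partial>Iv L)"
  by (simp add: aj_def LBINT_eq_integral_Iv)

lemma
  assumes L: "0 < L" and g: "g \<in> borel_measurable (Iv L)" and B: "AE x in Iv L. \<bar>g x\<bar> \<le> B"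
  shows AE_abs_le_Linf_norm: "AE x in Iv L. \<bar>g x\<bar> \<le> Linf_norm L g"
    and Linf_norm_nonneg: "0 \<le> Linf_norm L g"
proof -
  define e where "e = esssup (Iv L) (\<lambda>x. ereal \<bar>g x\<bar>)"
  have nontrivial: "ae_filter (Iv L) \<noteq> bot"
    using L by (simp add: ae_filter_eq_bot_iff space_Iv emeasure_restrict_space)
  have e_le_B: "e \<le> ereal B"
    unfolding e_def by (rule esssup_I) (use g B in \<open>auto elim: eventually_mono\<close>)
  have ae: "AE x in Iv L. ereal \<bar>g x\<bar> \<le> e"
    unfolding e_def by (rule esssup_AE)
  then have "AE x in Iv L. 0 \<le> e"
    by eventually_elim (meson abs_ge_zero ereal_less_eq(5) order_trans)
  then have "0 \<le> e"
    using nontrivial by (simp add: eventually_const)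
  then obtain r where r: "e = ereal r"
    using e_le_B by (cases e) auto
  then have "Linf_norm L g = r"
    by (simp add: Linf_norm_def e_def[symmetric])
  then show "0 \<le> Linf_norm L g" "AE x in Iv L. \<bar>g x\<bar> \<le> Linf_norm L g"
    using \<open>0 \<le> e\<close> ae r by auto
qed

lemma inV_measurable: "inV L v g \<Longrightarrow> g \<in> borel_measurable (Iv L)"
  by (simp add: inV_def)

lemma inV_square_integrable: "inV L v g \<Longrightarrow> integrable (Iv L) (\<lambda>x. (g x)\<^sup>2)"
  by (simp add: inV_def set_integrable_def integrable_restrict_space)

text \<open>Since \<open>v(x) = \<integral>\<^sub>0\<^sup>x v'\<close>, this is Cauchy--Schwarz for \<open>|v'|\<close> against \<open>1\<close> on \<open>(0,L)\<close>.\<close>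
lemma abs_le_sqrt_mult_H1_semi:
  assumes V: "inV L v g" and x: "x \<in> {0..L}"
  shows "\<bar>v x\<bar> \<le> sqrt L * H1_semi L g"
proof -
  interpret finite_measure "Iv L" by (rule finite_measure_Iv)
  have L: "0 \<le> L" using x by simp
  have g: "g \<in> borel_measurable (Iv L)" "integrable (Iv L) (\<lambda>x. (g x)\<^sup>2)"
    using V by (simp_all add: inV_measurable inV_square_integrable)
  have g_int: "integrable lborel (\<lambda>t. indicator {0<..<L} t *\<^sub>R \<bar>g t\<bar>)"
    using integrable_abs_mult_square_integrable[OF g(1) _ g(2), of "\<lambda>_. 1"]
    by (simp add: integrable_restrict_space)
  have "v x = (\<integral>t. indicator {0<..<x} t *\<^sub>R g t \<partial>lborel)"
    using V x by (simp add: inV_def interval_lebesgue_integral_def set_lebesgue_integral_def zero_ereal_def)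
  then have "\<bar>v x\<bar> \<le> (\<integral>t. \<bar>indicator {0<..<x} t *\<^sub>R g t\<bar> \<partial>lborel)"
    by (simp add: integral_abs_bound)
  also have "\<dots> \<le> (\<integral>t. indicator {0<..<L} t *\<^sub>R \<bar>g t\<bar> \<partial>lborel)"
    using x by (intro integral_mono' g_int) (auto simp: indicator_def)
  also have "\<dots> = (\<integral>t. \<bar>g t * 1\<bar> \<partial>Iv L)"
    by (simp add: integral_restrict_space)
  also have "\<dots> \<le> sqrt (\<integral>t. (g t)\<^sup>2 \<partial>Iv L) * sqrt (\<integral>t. 1\<^sup>2 \<partial>Iv L)"
    by (rule integral_abs_mult_le_sqrt) (use g in auto)
  also have "\<dots> = sqrt L * H1_semi L g"
    using L by (simp add: space_Iv measure_Iv H1_semi_eq)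
  finally show ?thesis .
qed

lemma aj_0_diagonal: "0 \<le> L \<Longrightarrow> aj L \<psi> 0 g g = (H1_semi L g)\<^sup>2"
  by (simp add: aj_eq H1_semi_eq power2_eq_square)

lemma abs_aj_le:
  assumes L: "0 \<le> L" and a: "inV L v a" and b: "inV L w b"
    and \<psi>: "AE x in Iv L. \<bar>\<psi> x\<bar> \<le> P" and P: "0 \<le> P"
  shows "\<bar>aj L \<psi> j a b\<bar> \<le> P ^ j * (H1_semi L a * H1_semi L b)"
proof -
  have "AE x in Iv L. \<bar>\<psi> x ^ j\<bar> \<le> P ^ j"
    using \<psi> by eventually_elim (simp add: power_abs power_mono)
  from abs_integral_weighted_mult_le[OF inV_measurable[OF a] inV_measurable[OF b]
      inV_square_integrable[OF a] inV_square_integrable[OF b] this]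
  have "\<bar>\<integral>x. \<psi> x ^ j * a x * b x \<partial>Iv L\<bar> \<le> P ^ j * (H1_semi L a * H1_semi L b)"
    using L P by (simp add: H1_semi_eq)
  moreover have "\<bar>aj L \<psi> j a b\<bar> \<le> \<bar>\<integral>x. \<psi> x ^ j * a x * b x \<partial>Iv L\<bar>"
    using L by (simp add: aj_eq abs_mult divide_le_eq mult_le_cancel_left1)
  ultimately show ?thesis
    by linarith
qed

lemma H1_semi_le_of_source_identity:
  assumes L: "0 \<le> L" and V: "inV L u g"
    and f: "AE x in Iv L. \<bar>f x\<bar> \<le> F" and F: "0 \<le> F"
    and identity: "aj L \<psi> 0 g g = (LBINT x=0..L. f x * u x)"
  shows "H1_semi L g \<le> L * sqrt L * F"
proof -
  interpret finite_measure "Iv L" by (rule finite_measure_Iv)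
  define c where "c = F * (sqrt L * H1_semi L g)"
  have "AE x in Iv L. f x * u x \<le> c"
    using f AE_space
  proof eventually_elim
    case (elim x)
    then have "\<bar>u x\<bar> \<le> sqrt L * H1_semi L g"
      by (intro abs_le_sqrt_mult_H1_semi[OF V]) (auto simp: space_Iv)
    have "f x * u x \<le> \<bar>f x\<bar> * \<bar>u x\<bar>"
      by (simp flip: abs_mult)
    also have "\<dots> \<le> c"
      unfolding c_def by (rule mult_mono) (use elim F \<open>\<bar>u x\<bar> \<le> _\<close> in auto)
    finally show ?case .
  qed
  then have "(\<integral>x. f x * u x \<partial>Iv L) \<le> (\<integral>x. c \<partial>Iv L)"
    by (intro integral_mono_AE') (use F L in \<open>auto simp: c_def H1_semi_nonneg\<close>)
  also have "\<dots> = (L * sqrt L * F) * H1_semi L g"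
    using L by (simp add: c_def space_Iv measure_Iv)
  finally have "(H1_semi L g)\<^sup>2 \<le> (L * sqrt L * F) * H1_semi L g"
    using identity by (simp add: aj_0_diagonal[OF L] LBINT_eq_integral_Iv[OF L])
  then show ?thesis
    by (rule le_of_square_le_mult[rotated 2]) (use L F in \<open>auto simp: H1_semi_nonneg\<close>)
qed

lemma H1_semi_le_of_recursion_identity:
  assumes L: "0 \<le> L" and V: "\<And>k. k \<le> n \<Longrightarrow> inV L (u k) (du k)"
    and \<psi>: "AE x in Iv L. \<bar>\<psi> x\<bar> \<le> P" and P: "0 \<le> P"
    and identity: "(\<Sum>j\<le>n. aj L \<psi> j (du (n - j)) (du n)) = 0"
  shows "H1_semi L (du n) \<le> (\<Sum>j=1..n. P ^ j * H1_semi L (du (n - j)))"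
proof -
  have "{..n} = insert 0 {1..n}"
    by auto
  then have "(H1_semi L (du n))\<^sup>2 = - (\<Sum>j=1..n. aj L \<psi> j (du (n - j)) (du n))"
    using identity aj_0_diagonal[OF L] by simp
  also have "\<dots> \<le> (\<Sum>j=1..n. \<bar>aj L \<psi> j (du (n - j)) (du n)\<bar>)"
    by (rule order_trans[OF abs_ge_minus_self sum_abs])
  also have "\<dots> \<le> (\<Sum>j=1..n. P ^ j * (H1_semi L (du (n - j)) * H1_semi L (du n)))"
    by (intro sum_mono abs_aj_le[OF L V V \<psi> P]) auto
  also have "\<dots> = (\<Sum>j=1..n. P ^ j * H1_semi L (du (n - j))) * H1_semi L (du n)"
    unfolding sum_distrib_right by (rule sum.cong) (simp_all add: mult_ac)
  finally show ?thesis
    by (rule le_of_square_le_mult[rotated 2]) (use L P in \<open>auto simp: H1_semi_nonneg intro!: sum_nonneg\<close>)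
qed

lemma H1_semi_perturbation_bound:
  fixes \<kappa> f :: "real \<Rightarrow> real" and u du :: "nat \<Rightarrow> real \<Rightarrow> real"
  assumes L: "0 < L"
    and \<kappa>: "\<kappa> \<in> borel_measurable (Iv L)" "0 < \<kappa>min"
      "AE x in Iv L. \<kappa>min \<le> \<kappa> x \<and> \<kappa> x \<le> \<kappa>max"
    and f: "in_Linf L f" and V: "\<forall>n. inV L (u n) (du n)"
    and E0: "\<forall>v dv. inV L v dv \<longrightarrow> aj L (\<lambda>x. ln (\<kappa> x)) 0 (du 0) dv = (LBINT x=0..L. f x * v x)"
    and En: "\<forall>n\<ge>1. \<forall>v dv. inV L v dv \<longrightarrow> (\<Sum>j\<le>n. aj L (\<lambda>x. ln (\<kappa> x)) j (du (n - j)) dv) = 0"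
  shows "H1_semi L (du m)
    \<le> (L * sqrt L * 2 ^ m) * Linf_norm L (\<lambda>x. ln (\<kappa> x)) ^ m * Linf_norm L f"
proof -
  define P where "P = Linf_norm L (\<lambda>x. ln (\<kappa> x))"
  define F where "F = Linf_norm L f"
  have "AE x in Iv L. \<bar>ln (\<kappa> x)\<bar> \<le> max \<bar>ln \<kappa>min\<bar> \<bar>ln \<kappa>max\<bar>"
    using \<kappa>(3)
  proof eventually_elim
    case (elim x)
    then have "ln \<kappa>min \<le> ln (\<kappa> x)" "ln (\<kappa> x) \<le> ln \<kappa>max"
      using \<kappa>(2) by auto
    then show ?case
      by linarith
  qed
  then have \<psi>: "AE x in Iv L. \<bar>ln (\<kappa> x)\<bar> \<le> P" "0 \<le> P"
    unfolding P_def using AE_abs_le_Linf_norm Linf_norm_nonneg L \<kappa>(1) by auto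
  obtain B where "AE x in Iv L. \<bar>f x\<bar> \<le> B" and "f \<in> borel_measurable (Iv L)"
    using f by (auto simp: in_Linf_def)
  then have f_bound: "AE x in Iv L. \<bar>f x\<bar> \<le> F" "0 \<le> F"
    unfolding F_def using AE_abs_le_Linf_norm Linf_norm_nonneg L by auto
  have "H1_semi L (du m) \<le> 2 ^ m * P ^ m * (L * sqrt L * F)"
  proof (rule convolution_recursion_bound)
    show "H1_semi L (du 0) \<le> L * sqrt L * F"
      using L V E0 f_bound by (intro H1_semi_le_of_source_identity) auto
    show "H1_semi L (du n) \<le> (\<Sum>j=1..n. P ^ j * H1_semi L (du (n - j)))" if "1 \<le> n" for n
      using L that V En \<psi> by (intro H1_semi_le_of_recursion_identity) auto
  qed (use L \<psi> f_bound in auto)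
  then show ?thesis
    by (simp add: P_def F_def mult_ac)
qed

theorem lemma5:
  fixes L :: real
  assumes "L > 0"
  shows "\<forall>m::nat. \<exists>C::real. \<forall>(\<kappa>::real \<Rightarrow> real) \<kappa>min \<kappa>max (f::real \<Rightarrow> real)
            (u::nat \<Rightarrow> real \<Rightarrow> real) (du::nat \<Rightarrow> real \<Rightarrow> real).
     (\<kappa> \<in> borel_measurable (Iv L) \<and> 0 < \<kappa>min \<and>
      (AE x in Iv L. \<kappa>min \<le> \<kappa> x \<and> \<kappa> x \<le> \<kappa>max) \<and>
      in_Linf L f \<and>
      (\<forall>n. inV L (u n) (du n)) \<and>
      (\<forall>v dv. inV L v dv \<longrightarrow>
          aj L (\<lambda>x. ln (\<kappa> x)) 0 (du 0) dv = (LBINT x=0..L. f x * v x)) \<and>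
      (\<forall>n\<ge>1. \<forall>v dv. inV L v dv \<longrightarrow>
          (\<Sum>j\<le>n. aj L (\<lambda>x. ln (\<kappa> x)) j (du (n - j)) dv) = 0))
     \<longrightarrow> H1_semi L (du m) \<le> C * (Linf_norm L (\<lambda>x. ln (\<kappa> x))) ^ m * Linf_norm L f"
  using H1_semi_perturbation_bound[OF assms] by blast

end
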